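(* Let $n,m\ge 1$ and $V(n,m)=\{1,\dots,n\}\times\{1,\dots,m\}$. The minimum number of segments of a geometric tree (whether or not it is required to be noncrossing) covering $V(n,m)$ is $\min(n,m)$ if $n=1$ or $m=1$ or $n=m=2$, and $\min(n,m)+1$ otherwise.
   Context: A geometric tree is a finite abstract tree with at least one edge whose vertices are distinct points of the plane and whose edges are drawn as closed straight-line segments between their endpoints; it covers $P$ if $P$ is contained in the union of its edges; it is noncrossing if any two edges intersect only in a common endpoint. The number of segments of a geometric tree is the minimum number of closed straight-line segments whose union equals the union of the edges of the tree. *)

theory Defs
  imports "HOL-Analysis.Analysis"
begin

type_synonym point = "real \<times> real"

text \<open>An abstract graph on a vertex set V of plane points, with edges as
  2-element vertex sets.\<close>

definition adj :: "point set set \<Rightarrow> point \<Rightarrow> point \<Rightarrow> bool" where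
  "adj E a b \<longleftrightarrow> {a, b} \<in> E"

definition is_cycle :: "point set set \<Rightarrow> point list \<Rightarrow> bool" where
  "is_cycle E vs \<longleftrightarrow> length vs \<ge> 3 \<and> distinct vs
     \<and> (\<forall>i. Suc i < length vs \<longrightarrow> adj E (vs ! i) (vs ! Suc i))
     \<and> adj E (last vs) (hd vs)"

definition connected_graph :: "point set \<Rightarrow> point set set \<Rightarrow> bool" where
  "connected_graph V E \<longleftrightarrow>
     (\<forall>a\<in>V. \<forall>b\<in>V. (a, b) \<in> {(x, y). adj E x y}\<^sup>*)"

definition geom_tree :: "point set \<Rightarrow> point set set \<Rightarrow> bool" where
  "geom_tree V E \<longleftrightarrow> finite V \<and> E \<noteq> {}
     \<and> (\<forall>e\<in>E. \<exists>a b. a \<noteq> b \<and> a \<in> V \<and> b \<in> V \<and> e = {a, b})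
     \<and> connected_graph V E
     \<and> (\<nexists>vs. set vs \<subseteq> V \<and> is_cycle E vs)"

definition edge_seg :: "point set \<Rightarrow> point set" where
  "edge_seg e = (\<Union>a\<in>e. \<Union>b\<in>e. closed_segment a b)"

definition tree_union :: "point set set \<Rightarrow> point set" where
  "tree_union E = (\<Union>e\<in>E. edge_seg e)"

definition covers :: "point set set \<Rightarrow> point set \<Rightarrow> bool" where
  "covers E P \<longleftrightarrow> P \<subseteq> tree_union E"

definition noncrossing :: "point set set \<Rightarrow> bool" where
  "noncrossing E \<longleftrightarrow> (\<forall>e\<in>E. \<forall>f\<in>E. e \<noteq> f \<longrightarrow> edge_seg e \<inter> edge_seg f \<subseteq> e \<inter> f)"

definition num_segments :: "point set set \<Rightarrow> nat" where
  "num_segments E = (LEAST k. \<exists>s :: nat \<Rightarrow> point \<times> point.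
      (\<Union>i<k. closed_segment (fst (s i)) (snd (s i))) = tree_union E)"

definition grid :: "nat \<Rightarrow> nat \<Rightarrow> point set" where
  "grid n m = {(real i, real j) | i j. 1 \<le> i \<and> i \<le> n \<and> 1 \<le> j \<and> j \<le> m}"

definition grid_value :: "nat \<Rightarrow> nat \<Rightarrow> nat" where
  "grid_value n m = (if n = 1 \<or> m = 1 \<or> (n = 2 \<and> m = 2) then min n m else min n m + 1)"

end

theory Submission
  imports Defs
begin

text \<open>
  The edges of a geometric tree form a connected union of num_segments E segments.
  A row of the grid on which no segment lies horizontally meets every segment in at most one
  point, so k segments covering the grid satisfy k \<ge> min n m. Suppose k = n \<le> m, n \<ge> 2 and
  (n, m) \<noteq> (2, 2). If every row carries a horizontal segment, then n = m and the segments lie on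
  distinct rows. Otherwise no segment is horizontal, each one passes through exactly one grid point
  of each row, and its column in row j is an integer affine function a + (j - 1) d with values in
  {1..n} for j = 1..m. This forces d = 0, except for the two diagonals of a square grid, and a
  diagonal collides in row 2 with the vertical segment through column 2 or n - 1. So the
  segments lie on distinct columns. In both cases the union is a disjoint union of at least two
  nonempty closed sets, hence disconnected.

  A comb, with a spine of min n m unit edges along the shorter side of the grid and a
  tooth of length max n m at each of its lattice points, is a noncrossing tree covered by the
  spine segment and the teeth; if min n m = 1 the single tooth suffices. For the 2 \<times> 2 grid,
  the two diagonals cut at the centre form a star.
\<close>

section \<open>Segments in the plane\<close>

lemma closed_segment_coords:
  fixes a b p :: point
  assumes "p \<in> closed_segment a b"
  obtains u where "0 \<le> u" "u \<le> 1"
    "fst p = (1 - u) * fst a + u * fst b" "snd p = (1 - u) * snd a + u * snd b"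
  using assms unfolding closed_segment_def by auto

lemma snd_mem_horizontal_segment:
  fixes a b p :: point
  assumes "snd a = snd b" "p \<in> closed_segment a b"
  shows "snd p = snd a"
proof -
  obtain u where "snd p = (1 - u) * snd a + u * snd b" using closed_segment_coords[OF assms(2)] .
  thus ?thesis using assms(1) by (simp add: algebra_simps)
qed

lemma fst_mem_nonhorizontal_segment:
  fixes a b p :: point
  assumes "snd a \<noteq> snd b" "p \<in> closed_segment a b"
  shows "fst p = fst a + (snd p - snd a) * ((fst b - fst a) / (snd b - snd a))"
proof -
  obtain u where u: "fst p = (1 - u) * fst a + u * fst b" "snd p = (1 - u) * snd a + u * snd b"
    using closed_segment_coords[OF assms(2)] .
  have "snd p - snd a = u * (snd b - snd a)" using u(2) by (simp add: algebra_simps)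
  hence "(snd p - snd a) * ((fst b - fst a) / (snd b - snd a)) = u * (fst b - fst a)"
    using assms(1) by simp
  thus ?thesis using u(1) by (simp add: algebra_simps)
qed

lemma nonhorizontal_segment_collinear:
  fixes a b p q r :: point
  assumes "snd a \<noteq> snd b" "p \<in> closed_segment a b" "q \<in> closed_segment a b" "r \<in> closed_segment a b"
  shows "(fst r - fst p) * (snd q - snd p) = (fst q - fst p) * (snd r - snd p)"
proof -
  define \<beta> where "\<beta> = (fst b - fst a) / (snd b - snd a)"
  have "fst x = fst a + (snd x - snd a) * \<beta>" if "x \<in> closed_segment a b" for x
    using fst_mem_nonhorizontal_segment[OF assms(1) that] unfolding \<beta>_def .
  from this[OF assms(2)] this[OF assms(3)] this[OF assms(4)]
  have "fst r - fst p = (snd r - snd p) * \<beta>" "fst q - fst p = (snd q - snd p) * \<beta>"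
    by (simp_all add: algebra_simps)
  thus ?thesis by simp
qed

lemma nonhorizontal_segment_eq_if_snd_eq:
  fixes a b p q :: point
  assumes "snd a \<noteq> snd b" "p \<in> closed_segment a b" "q \<in> closed_segment a b" "snd p = snd q"
  shows "p = q"
  using fst_mem_nonhorizontal_segment[OF assms(1,2)] fst_mem_nonhorizontal_segment[OF assms(1,3)] assms(4)
  by (simp add: prod_eq_iff)

lemma edge_seg_doubleton [simp]: "edge_seg {a, b} = closed_segment a b"
proof -
  have "closed_segment a a \<subseteq> closed_segment a b" "closed_segment b b \<subseteq> closed_segment a b"
    using ends_in_segment[of a b] by auto
  moreover have "edge_seg {a, b} = closed_segment a a \<union> closed_segment a b \<union> closed_segment b a \<union> closed_segment b b"
    unfolding edge_seg_def by auto
  ultimately show ?thesis using closed_segment_commute[of a b] by blast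
qed

lemma not_connected_UN_level_sets:
  fixes S :: "nat \<Rightarrow> 'a::topological_space set"
  assumes "inj_on c {..<k}" "2 \<le> k"
    and "\<And>i. i < k \<Longrightarrow> S i \<noteq> {}" "\<And>i. i < k \<Longrightarrow> closed (S i)"
    and "\<And>i. i < k \<Longrightarrow> S i \<subseteq> {p. g p = c i}"
  shows "\<not> connected (\<Union>i<k. S i)"
proof -
  let ?Y = "\<Union>i\<in>{1..<k}. S i"
  have split: "(\<Union>i<k. S i) = S 0 \<union> ?Y"
  proof -
    have "{..<k} = insert 0 {1..<k}" using assms(2) by auto
    thus ?thesis by simp
  qed
  have "S 0 \<inter> S i = {}" if "i \<in> {1..<k}" for i
    using assms(5)[of 0] assms(5)[of i] inj_onD[OF assms(1), of i 0] assms(2) that by fastforce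
  hence disjoint: "S 0 \<inter> ?Y \<inter> (S 0 \<union> ?Y) = {}" by blast
  have nonempty: "S 0 \<inter> (S 0 \<union> ?Y) \<noteq> {}" "?Y \<inter> (S 0 \<union> ?Y) \<noteq> {}"
    using assms(2,3) by fastforce+
  have "closed (S 0)" "closed ?Y" using assms(2,4) by auto
  thus ?thesis
    unfolding split using connected_closedD[OF _ disjoint subset_refl] nonempty by blast
qed


section \<open>Families of segments covering the grid\<close>

definition seg :: "(nat \<Rightarrow> point \<times> point) \<Rightarrow> nat \<Rightarrow> point set" where
  "seg s i = closed_segment (fst (s i)) (snd (s i))"

definition horizontal :: "(nat \<Rightarrow> point \<times> point) \<Rightarrow> nat \<Rightarrow> bool" where
  "horizontal s i \<longleftrightarrow> snd (fst (s i)) = snd (snd (s i))"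

lemma seg_nonempty: "seg s i \<noteq> {}"
  and closed_seg: "closed (seg s i)"
  unfolding seg_def by auto

lemma snd_mem_seg_horizontal: "horizontal s i \<Longrightarrow> p \<in> seg s i \<Longrightarrow> snd p = snd (fst (s i))"
  unfolding horizontal_def seg_def by (rule snd_mem_horizontal_segment)

lemma mem_seg_eq_if_snd_eq:
  "\<not> horizontal s i \<Longrightarrow> p \<in> seg s i \<Longrightarrow> q \<in> seg s i \<Longrightarrow> snd p = snd q \<Longrightarrow> p = q"
  unfolding horizontal_def seg_def by (rule nonhorizontal_segment_eq_if_snd_eq)

text \<open>Meaningful only if segment i is not horizontal and meets row j in a lattice point;
  otherwise THE yields an arbitrary value.\<close>
definition column :: "(nat \<Rightarrow> point \<times> point) \<Rightarrow> nat \<Rightarrow> nat \<Rightarrow> nat" where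
  "column s i j = (THE c. (real c, real j) \<in> seg s i)"

lemma column_eqI: "\<not> horizontal s i \<Longrightarrow> (real c, real j) \<in> seg s i \<Longrightarrow> column s i j = c"
  unfolding column_def by (rule the_equality) (auto dest: mem_seg_eq_if_snd_eq)

lemma mem_seg_collinear:
  "\<not> horizontal s i \<Longrightarrow> p \<in> seg s i \<Longrightarrow> q \<in> seg s i \<Longrightarrow> r \<in> seg s i \<Longrightarrow>
    (fst r - fst p) * (snd q - snd p) = (fst q - fst p) * (snd r - snd p)"
  unfolding horizontal_def seg_def by (rule nonhorizontal_segment_collinear)

lemma affine_slopes_zero:
  fixes a d :: "nat \<Rightarrow> int" and n m :: nat
  assumes "n \<le> m" "3 \<le> m"
    and range: "\<And>i j. i < n \<Longrightarrow> j \<in> {1..m} \<Longrightarrow> a i + (int j - 1) * d i \<in> {1..int n}"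
    and surj: "\<And>c. c \<in> {1..int n} \<Longrightarrow> \<exists>i<n. a i = c"
    and inj: "inj_on (\<lambda>i. a i + d i) {..<n}"
    and "i < n"
  shows "d i = 0"
proof -
  have ends: "a i \<in> {1..int n}" "a i + (int m - 1) * d i \<in> {1..int n}" if "i < n" for i
    using range[OF that, of 1] range[OF that, of m] assms(2) by auto
  have up: "(int m - 1) * d i \<ge> int m - 1" if "d i \<ge> 1" for i
    using mult_left_mono[OF that, of "int m - 1"] assms(2) by simp
  have down: "(int m - 1) * d i \<le> 1 - int m" if "d i \<le> -1" for i
    using mult_left_mono[OF that, of "int m - 1"] assms(2) by simp
  have interior: "d i = 0" if "i < n" "1 < a i" "a i < int n" for i
    using ends[OF that(1)] up[of i] down[of i] that(2,3) assms(1) by fastforce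
  show ?thesis
  proof (rule ccontr)
    assume "d i \<noteq> 0"
    have split: "(int m - 1) * d i = d i + (int m - 2) * d i" by algebra
    have "1 < a i + d i \<and> a i + d i < int n"
    proof (cases "d i > 0")
      case True
      hence "(int m - 2) * d i > 0" using assms(2) by simp
      thus ?thesis using True ends[OF \<open>i < n\<close>] split by auto
    next
      case False
      hence "(int m - 2) * d i < 0" using \<open>d i \<noteq> 0\<close> assms(2) by (simp add: mult_pos_neg)
      thus ?thesis using False \<open>d i \<noteq> 0\<close> ends[OF \<open>i < n\<close>] split by auto
    qed
    moreover obtain i' where "i' < n" "a i' = a i + d i" using surj[of "a i + d i"] calculation by auto
    ultimately have "d i' = 0" using interior by auto
    hence "i' = i" using inj_onD[OF inj, of i' i] \<open>i' < n\<close> \<open>i < n\<close> \<open>a i' = a i + d i\<close> by simp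
    thus False using \<open>d i' = 0\<close> \<open>d i \<noteq> 0\<close> by simp
  qed
qed

locale grid_segment_cover =
  fixes n m k :: nat and s :: "nat \<Rightarrow> point \<times> point"
  assumes grid_covered: "grid n m \<subseteq> (\<Union>i<k. seg s i)"
begin

lemma grid_point_covered: "c \<in> {1..n} \<Longrightarrow> j \<in> {1..m} \<Longrightarrow> \<exists>i<k. (real c, real j) \<in> seg s i"
  using grid_covered unfolding grid_def by fastforce

lemma row_without_horizontal:
  assumes j: "j \<in> {1..m}" and no_hor: "\<forall>i<k. horizontal s i \<longrightarrow> snd (fst (s i)) \<noteq> real j"
  shows "n \<le> k"
    and "k = n \<Longrightarrow> i < k \<Longrightarrow> \<exists>c\<in>{1..n}. (real c, real j) \<in> seg s i"
proof -
  have nonhor: "\<not> horizontal s i" if "i < k" "(x, real j) \<in> seg s i" for i x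
    using no_hor snd_mem_seg_horizontal[OF _ that(2)] that(1) by auto
  obtain \<sigma> where \<sigma>: "\<forall>c\<in>{1..n}. \<sigma> c < k \<and> (real c, real j) \<in> seg s (\<sigma> c)"
    using bchoice[of "{1..n}" "\<lambda>c i. i < k \<and> (real c, real j) \<in> seg s i"] grid_point_covered j
    by blast
  have "inj_on \<sigma> {1..n}"
  proof (rule inj_onI)
    fix c c' assume cc': "c \<in> {1..n}" "c' \<in> {1..n}" "\<sigma> c = \<sigma> c'"
    have "(real c, real j) \<in> seg s (\<sigma> c)" "\<sigma> c < k" using \<sigma> cc'(1) by auto
    moreover have "(real c', real j) \<in> seg s (\<sigma> c)" using \<sigma> cc'(2) unfolding cc'(3) by blast
    ultimately show "c = c'"
      using nonhor mem_seg_eq_if_snd_eq[of s "\<sigma> c" "(real c, real j)" "(real c', real j)"] by auto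
  qed
  hence card: "card (\<sigma> ` {1..n}) = n" by (simp add: card_image)
  have sub: "\<sigma> ` {1..n} \<subseteq> {..<k}" using \<sigma> by auto
  show "n \<le> k" using card_mono[OF _ sub] card by simp
  show "\<exists>c\<in>{1..n}. (real c, real j) \<in> seg s i" if "k = n" "i < k"
  proof -
    have "\<sigma> ` {1..n} = {..<k}" using card_subset_eq[OF _ sub] card that(1) by simp
    with \<open>i < k\<close> obtain c where "c \<in> {1..n}" "i = \<sigma> c" by (metis imageE lessThan_iff)
    thus ?thesis using \<sigma> by blast
  qed
qed

lemma min_le_segments: "min n m \<le> k"
proof (rule ccontr)
  assume "\<not> min n m \<le> k"
  hence "k < n" "k < m" by auto
  let ?H = "(\<lambda>i. snd (fst (s i))) ` {i. i < k \<and> horizontal s i}"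
  have "card ?H \<le> card {i. i < k \<and> horizontal s i}" by (rule card_image_le) simp
  also have "\<dots> \<le> card {..<k}" by (rule card_mono) auto
  finally have "card ?H < m" using \<open>k < m\<close> by simp
  moreover have "card (real ` {1..m}) = m" by (simp add: card_image)
  ultimately have "\<not> real ` {1..m} \<subseteq> ?H"
    using card_mono[of ?H "real ` {1..m}"] by force
  then obtain j where j: "j \<in> {1..m}" "real j \<notin> ?H" by blast
  hence "\<forall>i<k. horizontal s i \<longrightarrow> snd (fst (s i)) \<noteq> real j" by force
  thus False using row_without_horizontal(1)[OF j(1)] \<open>k < n\<close> by simp
qed

lemma disconnected_if_rows_horizontal:
  assumes "k = n" "n \<le> m" "2 \<le> n"
    and rows: "\<forall>j\<in>{1..m}. \<exists>i<k. horizontal s i \<and> snd (fst (s i)) = real j"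
  shows "\<not> connected (\<Union>i<k. seg s i)"
proof -
  let ?I = "{i. i < k \<and> horizontal s i}" and ?h = "\<lambda>i. snd (fst (s i))"
  have "real ` {1..m} \<subseteq> ?h ` ?I" using rows by force
  hence "card (real ` {1..m}) \<le> card (?h ` ?I)" by (intro card_mono) auto
  hence "m \<le> card (?h ` ?I)" by (simp add: card_image)
  moreover have "card (?h ` ?I) \<le> card ?I" by (rule card_image_le) simp
  moreover have "card ?I \<le> card {..<k}" by (rule card_mono) auto
  ultimately have card_eq: "card (?h ` ?I) = card ?I" "card ?I = card {..<k}"
    using assms(1,2) by simp_all
  have I: "?I = {..<k}" using card_subset_eq[OF _ _ card_eq(2)] by auto
  have inj: "inj_on ?h {..<k}" using eq_card_imp_inj_on[OF _ card_eq(1)] I by simp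
  show ?thesis
    by (rule not_connected_UN_level_sets[where g = snd, OF inj])
      (use assms(1,3) I in \<open>auto simp: seg_nonempty closed_seg dest: snd_mem_seg_horizontal\<close>)
qed

context
  assumes k: "k = n" and no_hor: "\<forall>i<k. \<not> horizontal s i"
begin

lemma row_columns_bij:
  assumes "j \<in> {1..m}"
  shows "bij_betw (\<lambda>i. column s i j) {..<k} {1..n}"
    and "i < k \<Longrightarrow> (real (column s i j), real j) \<in> seg s i"
proof -
  have col: "column s i j \<in> {1..n} \<and> (real (column s i j), real j) \<in> seg s i" if i: "i < k" for i
  proof -
    obtain c where "c \<in> {1..n}" "(real c, real j) \<in> seg s i"
      using row_without_horizontal(2)[OF assms _ k i] no_hor by blast
    thus ?thesis using column_eqI no_hor i by metis
  qed
  thus "i < k \<Longrightarrow> (real (column s i j), real j) \<in> seg s i" by blast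
  have image: "(\<lambda>i. column s i j) ` {..<k} = {1..n}"
  proof
    show "(\<lambda>i. column s i j) ` {..<k} \<subseteq> {1..n}" using col by auto
    show "{1..n} \<subseteq> (\<lambda>i. column s i j) ` {..<k}"
    proof
      fix c assume "c \<in> {1..n}"
      then obtain i where "i < k" "(real c, real j) \<in> seg s i"
        using grid_point_covered assms by blast
      thus "c \<in> (\<lambda>i. column s i j) ` {..<k}" using column_eqI no_hor by force
    qed
  qed
  moreover have "inj_on (\<lambda>i. column s i j) {..<k}"
    by (rule eq_card_imp_inj_on) (unfold image, use k in simp_all)
  ultimately show "bij_betw (\<lambda>i. column s i j) {..<k} {1..n}" unfolding bij_betw_def by blast
qed

lemma column_affine:
  assumes "2 \<le> m" "i < k" "j \<in> {1..m}"
  shows "int (column s i j) = int (column s i 1) + (int j - 1) * (int (column s i 2) - int (column s i 1))"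
proof -
  have on_seg: "(real (column s i j'), real j') \<in> seg s i" if "j' \<in> {1..m}" for j'
    using row_columns_bij(2)[OF that assms(2)] .
  have "(real (column s i j) - real (column s i 1)) * (2 - 1)
      = (real (column s i 2) - real (column s i 1)) * (real j - 1)"
    using mem_seg_collinear[of s i "(real (column s i 1), 1)" "(real (column s i 2), 2)"
        "(real (column s i j), real j)"] on_seg[of 1] on_seg[of 2] on_seg[OF assms(3)] no_hor assms(1,2)
    by auto
  hence "real_of_int (int (column s i j))
      = real_of_int (int (column s i 1) + (int j - 1) * (int (column s i 2) - int (column s i 1)))"
    using assms(3) by (simp add: algebra_simps)
  thus ?thesis by (simp only: of_int_eq_iff)
qed

lemma column_constant:
  assumes "n \<le> m" "3 \<le> m" "i < k"
  shows "column s i 2 = column s i 1"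
proof -
  have one: "1 \<in> {1..m}" and two: "2 \<in> {1..m}" using assms(2) by auto
  have "int (column s i 2) - int (column s i 1) = 0"
  proof (rule affine_slopes_zero[where a = "\<lambda>i. int (column s i 1)"
        and d = "\<lambda>i. int (column s i 2) - int (column s i 1)", OF assms(1,2)])
    show "int (column s i 1) + (int j - 1) * (int (column s i 2) - int (column s i 1)) \<in> {1..int n}"
      if "i < n" "j \<in> {1..m}" for i j
    proof -
      have "column s i j \<in> {1..n}"
        using bij_betwE[OF row_columns_bij(1)[OF that(2)]] that(1) k by blast
      thus ?thesis using column_affine[OF _ _ that(2)] that(1) assms(2) k by fastforce
    qed
    show "\<exists>i<n. int (column s i 1) = c" if "c \<in> {1..int n}" for c
    proof -
      have "nat c \<in> (\<lambda>i. column s i 1) ` {..<k}"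
        using bij_betw_imp_surj_on[OF row_columns_bij(1)[OF one]] that by auto
      thus ?thesis using that k by force
    qed
    show "inj_on (\<lambda>i. int (column s i 1) + (int (column s i 2) - int (column s i 1))) {..<n}"
      using bij_betw_imp_inj_on[OF row_columns_bij(1)[OF two]] k by (simp add: inj_on_def)
  qed (use assms(3) k in simp)
  thus ?thesis by simp
qed

lemma seg_vertical:
  assumes "n \<le> m" "3 \<le> m" "i < k"
  shows "seg s i \<subseteq> {p. fst p = real (column s i 1)}"
proof
  fix p assume "p \<in> seg s i"
  moreover have "(real (column s i j), real j) \<in> seg s i" if "j \<in> {1..m}" for j
    using row_columns_bij(2)[OF that assms(3)] .
  from this[of 1] this[of 2] have "(real (column s i 1), 1) \<in> seg s i" "(real (column s i 2), 2) \<in> seg s i"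
    using assms(2) by auto
  ultimately have "(fst p - real (column s i 1)) * (2 - 1)
      = (real (column s i 2) - real (column s i 1)) * (snd p - 1)"
    using mem_seg_collinear[of s i "(real (column s i 1), 1)" "(real (column s i 2), 2)" p] no_hor assms(3)
    by simp
  thus "p \<in> {p. fst p = real (column s i 1)}" using column_constant[OF assms] by simp
qed

lemma disconnected_if_no_horizontal:
  assumes "n \<le> m" "2 \<le> n" "3 \<le> m"
  shows "\<not> connected (\<Union>i<k. seg s i)"
proof -
  have "inj_on (\<lambda>i. real (column s i 1)) {..<k}"
    using bij_betw_imp_inj_on[OF row_columns_bij(1)[of 1]] assms by (simp add: inj_on_def)
  thus ?thesis
    by (rule not_connected_UN_level_sets[where g = fst])
      (use assms k seg_vertical in \<open>auto simp: seg_nonempty closed_seg\<close>)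
qed

end

lemma disconnected_if_min_segments:
  assumes "k = n" "2 \<le> n" "n \<le> m" "\<not> (n = 2 \<and> m = 2)"
  shows "\<not> connected (\<Union>i<k. seg s i)"
proof (cases "\<forall>j\<in>{1..m}. \<exists>i<k. horizontal s i \<and> snd (fst (s i)) = real j")
  case True
  thus ?thesis using disconnected_if_rows_horizontal assms by blast
next
  case False
  then obtain j where j: "j \<in> {1..m}" "\<forall>i<k. horizontal s i \<longrightarrow> snd (fst (s i)) \<noteq> real j"
    by blast
  have "\<not> horizontal s i" if i: "i < k" for i
  proof
    assume hor: "horizontal s i"
    obtain c where "(real c, real j) \<in> seg s i"
      using row_without_horizontal(2)[OF j assms(1) i] by blast
    thus False using snd_mem_seg_horizontal[OF hor] j(2) i hor by force
  qed
  moreover have "3 \<le> m" using assms(2-4) by auto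
  ultimately show ?thesis using disconnected_if_no_horizontal assms by blast
qed

end

lemma linear_swap: "linear (prod.swap :: point \<Rightarrow> point)"
proof -
  have "bounded_linear (\<lambda>p::point. (snd p, fst p))"
    by (intro bounded_linear_Pair bounded_linear_fst bounded_linear_snd)
  thus ?thesis unfolding prod.swap_def by (rule bounded_linear.linear)
qed

lemma grid_swap: "grid m n = prod.swap ` grid n m"
  unfolding grid_def by force

lemma grid_value_le_segments:
  assumes cover: "grid n m \<subseteq> (\<Union>i<k. seg s i)" and conn: "connected (\<Union>i<k. seg s i)"
    and "1 \<le> n" "1 \<le> m"
  shows "grid_value n m \<le> k"
proof -
  interpret grid_segment_cover n m k s by unfold_locales (rule cover)
  have "k \<noteq> min n m" if exceptional: "\<not> (n = 1 \<or> m = 1 \<or> n = 2 \<and> m = 2)"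
  proof (cases "n \<le> m")
    case True
    thus ?thesis using disconnected_if_min_segments conn exceptional assms(3) by auto
  next
    case False
    define s' where "s' i = (prod.swap (fst (s i)), prod.swap (snd (s i)))" for i
    have "(\<Union>i<k. seg s' i) = prod.swap ` (\<Union>i<k. seg s i)"
      unfolding seg_def s'_def by (simp add: closed_segment_linear_image[OF linear_swap] image_UN)
    hence cover': "grid m n \<subseteq> (\<Union>i<k. seg s' i)" and conn': "connected (\<Union>i<k. seg s' i)"
      using cover conn grid_swap[of m n] connected_linear_image[OF linear_swap] by auto
    interpret swapped: grid_segment_cover m n k s' by unfold_locales (rule cover')
    show ?thesis using swapped.disconnected_if_min_segments conn' False exceptional assms(4) by auto
  qed
  thus ?thesis using min_le_segments unfolding grid_value_def by auto
qed

section \<open>Geometric trees\<close>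

lemma geom_tree_edge: "geom_tree V E \<Longrightarrow> e \<in> E \<Longrightarrow> \<exists>a b. a \<noteq> b \<and> a \<in> V \<and> b \<in> V \<and> e = {a, b}"
  unfolding geom_tree_def by blast

lemma finite_geom_tree_edges: "geom_tree V E \<Longrightarrow> finite E"
  using finite_subset[of E "Pow V"] geom_tree_edge[of V E] unfolding geom_tree_def by blast

lemma tree_union_segments:
  assumes "geom_tree V E"
  shows "\<exists>k s. (\<Union>i<k. seg s i) = tree_union E"
proof -
  obtain es where es: "set es = E" using finite_list[OF finite_geom_tree_edges[OF assms]] by blast
  obtain g where g: "\<forall>e\<in>E. e = {fst (g e), snd (g e)}"
    using bchoice[of E "\<lambda>e p. e = {fst p, snd p}"] geom_tree_edge[OF assms] by fastforce
  have "(\<Union>i<length es. seg (\<lambda>i. g (es ! i)) i) = (\<Union>i<length es. edge_seg (es ! i))"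
    using g es unfolding seg_def by (metis (no_types, lifting) SUP_cong edge_seg_doubleton lessThan_iff nth_mem)
  also have "\<dots> = tree_union E"
    unfolding tree_union_def es[symmetric] by (auto simp: set_conv_nth)
  finally show ?thesis by blast
qed

lemma connected_tree_union:
  assumes T: "geom_tree V E"
  shows "connected (tree_union E)"
proof -
  obtain e0 where "e0 \<in> E" using T unfolding geom_tree_def by blast
  then obtain a0 b0 where a0: "{a0, b0} \<in> E" "a0 \<in> V" using geom_tree_edge[OF T] by blast
  let ?K = "connected_component_set (tree_union E) a0"
  have in_union: "closed_segment a b \<subseteq> tree_union E" if "{a, b} \<in> E" for a b
    using that unfolding tree_union_def by (metis UN_upper edge_seg_doubleton)
  have into_K: "closed_segment a b \<subseteq> ?K" if "{a, b} \<in> E" "a \<in> ?K" for a b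
    using connected_component_maximal[of a "closed_segment a b" "tree_union E"]
      connected_component_eq[OF that(2)] in_union[OF that(1)] by auto
  have "v \<in> ?K" if "(a0, v) \<in> {(x, y). adj E x y}\<^sup>*" for v
    using that
  proof (induction rule: rtrancl_induct)
    case base
    show ?case using in_union[OF a0(1)] by auto
  next
    case (step y z)
    thus ?case using into_K[of y z] unfolding adj_def by auto
  qed
  hence "V \<subseteq> ?K" using T a0(2) unfolding geom_tree_def connected_graph_def by blast
  have "edge_seg e \<subseteq> ?K" if e: "e \<in> E" for e
  proof -
    obtain a b where "a \<in> V" "e = {a, b}" using geom_tree_edge[OF T e] by blast
    thus ?thesis using into_K[of a b] \<open>V \<subseteq> ?K\<close> e by auto
  qed
  hence "tree_union E \<subseteq> ?K" by (metis UN_least tree_union_def)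
  hence "tree_union E = ?K" using connected_component_subset by blast
  thus ?thesis by (metis connected_connected_component)
qed

lemma num_segments_attained:
  assumes "geom_tree V E"
  obtains s where "(\<Union>i<num_segments E. seg s i) = tree_union E"
  using LeastI_ex[OF tree_union_segments[OF assms, unfolded seg_def]] that
  unfolding num_segments_def seg_def by blast

lemma num_segments_le: "(\<Union>i<k. seg s i) = tree_union E \<Longrightarrow> num_segments E \<le> k"
  unfolding num_segments_def seg_def by (rule Least_le) (rule exI)

theorem grid_value_le_num_segments:
  assumes "geom_tree V E" "covers E (grid n m)" "1 \<le> n" "1 \<le> m"
  shows "grid_value n m \<le> num_segments E"
proof -
  obtain s where s: "(\<Union>i<num_segments E. seg s i) = tree_union E"
    using num_segments_attained[OF assms(1)] .
  show ?thesis
    by (rule grid_value_le_segments)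
      (use s assms connected_tree_union[OF assms(1)] in \<open>auto simp: covers_def\<close>)
qed

lemma geom_tree_doubleton:
  assumes "a \<noteq> b"
  shows "geom_tree {a, b} {{a, b}}"
proof -
  have "connected_graph {a, b} {{a, b}}"
    unfolding connected_graph_def adj_def by (auto simp: insert_commute)
  moreover have "\<not> is_cycle {{a, b}} vs" if "set vs \<subseteq> {a, b}" for vs
  proof
    assume "is_cycle {{a, b}} vs"
    hence "3 \<le> length vs" "distinct vs" unfolding is_cycle_def by auto
    moreover have "card (set vs) \<le> card {a, b}" using card_mono[OF _ that] by simp
    moreover have "card {a, b} \<le> 2" by (cases "a = b") auto
    ultimately show False by (simp add: distinct_card)
  qed
  moreover have "\<exists>x y. x \<noteq> y \<and> x \<in> {a, b} \<and> y \<in> {a, b} \<and> {a, b} = {x, y}"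
    using assms by (intro exI[of _ a] exI[of _ b]) auto
  ultimately show ?thesis unfolding geom_tree_def by auto
qed

text \<open>A cycle through a leaf would have to leave it along two distinct edges.\<close>
lemma cycle_avoids_leaf:
  assumes "a \<notin> V" "\<forall>e\<in>E. e \<subseteq> V" "is_cycle (insert {a, b} E) vs"
  shows "a \<notin> set vs"
proof
  assume "a \<in> set vs"
  then obtain p where p: "p < length vs" "vs ! p = a" by (metis in_set_conv_nth)
  have cyc: "3 \<le> length vs" "distinct vs"
    "\<And>i. Suc i < length vs \<Longrightarrow> adj (insert {a, b} E) (vs ! i) (vs ! Suc i)"
    "adj (insert {a, b} E) (last vs) (hd vs)"
    using assms(3) unfolding is_cycle_def by auto
  have "vs \<noteq> []" using cyc(1) by auto
  hence closing: "adj (insert {a, b} E) (vs ! (length vs - 1)) (vs ! 0)"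
    using cyc(4) by (simp add: last_conv_nth hd_conv_nth)
  have only_b: "y = b" if "adj (insert {a, b} E) a y \<or> adj (insert {a, b} E) y a" for y
  proof -
    have "{a, y} \<in> insert {a, b} E" using that unfolding adj_def by (auto simp: insert_commute)
    moreover have "{a, y} \<notin> E" using assms(1,2) by blast
    ultimately show ?thesis by (auto simp: doubleton_eq_iff)
  qed
  define nx where "nx = (if p = length vs - 1 then 0 else Suc p)"
  define pv where "pv = (if p = 0 then length vs - 1 else p - 1)"
  have "vs ! nx = b"
    using only_b cyc(3)[of p] closing p unfolding nx_def by (cases "p = length vs - 1") auto
  moreover have "vs ! pv = b"
    using only_b cyc(3)[of "p - 1"] closing p unfolding pv_def by (cases "p = 0") auto
  moreover have "nx < length vs" "pv < length vs" "nx \<noteq> pv" using p cyc(1) unfolding nx_def pv_def by auto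
  ultimately show False using cyc(2) nth_eq_iff_index_eq by metis
qed

lemma connected_graph_insert_leaf:
  assumes G: "connected_graph V E" and b: "b \<in> V"
  shows "connected_graph (insert a V) (insert {a, b} E)"
proof -
  let ?R' = "{(x, y). adj (insert {a, b} E) x y}"
  have "{(x, y). adj E x y} \<subseteq> ?R'" unfolding adj_def by auto
  hence reach: "(x, y) \<in> ?R'\<^sup>*" if "x \<in> V" "y \<in> V" for x y
    using G that rtrancl_mono unfolding connected_graph_def by blast
  have ab: "(a, b) \<in> ?R'" "(b, a) \<in> ?R'" unfolding adj_def by (auto simp: insert_commute)
  show ?thesis
    unfolding connected_graph_def
    using reach b rtrancl_into_rtrancl[OF reach[OF _ b] ab(2)]
      converse_rtrancl_into_rtrancl[OF ab(1) reach[OF b]] by auto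
qed

lemma geom_tree_insert_leaf:
  assumes T: "geom_tree V E" and a: "a \<notin> V" and b: "b \<in> V"
  shows "geom_tree (insert a V) (insert {a, b} E)"
proof -
  let ?E = "insert {a, b} E"
  have "\<not> is_cycle ?E vs" if vs: "set vs \<subseteq> insert a V" for vs
  proof
    assume cyc: "is_cycle ?E vs"
    have "\<forall>e\<in>E. e \<subseteq> V" using geom_tree_edge[OF T] by blast
    hence "a \<notin> set vs" using cycle_avoids_leaf[OF a _ cyc] by blast
    hence "set vs \<subseteq> V" using vs by blast
    moreover have "adj E x y" if "x \<in> set vs" "y \<in> set vs" "adj ?E x y" for x y
      using that \<open>a \<notin> set vs\<close> unfolding adj_def by (auto simp: doubleton_eq_iff)
    hence "is_cycle E vs" using cyc unfolding is_cycle_def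
      by (metis Suc_lessD hd_in_set last_in_set length_0_conv not_numeral_le_zero nth_mem)
    ultimately show False using T unfolding geom_tree_def by blast
  qed
  moreover have "\<exists>x y. x \<noteq> y \<and> x \<in> insert a V \<and> y \<in> insert a V \<and> e = {x, y}"
    if "e \<in> ?E" for e
  proof (cases "e = {a, b}")
    case True
    thus ?thesis using a b by (intro exI[of _ a] exI[of _ b]) auto
  next
    case False
    thus ?thesis using geom_tree_edge[OF T] that by blast
  qed
  moreover have "connected_graph (insert a V) ?E"
    using T b connected_graph_insert_leaf unfolding geom_tree_def by blast
  ultimately show ?thesis using T unfolding geom_tree_def by auto
qed

section \<open>Combs and the star\<close>

text \<open>The comb is built in a coordinate system whose axes are exchanged when sw holds, so that
  its spine can be laid along the shorter side of the grid.\<close>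
definition oriented :: "bool \<Rightarrow> real \<Rightarrow> real \<Rightarrow> point" where
  "oriented sw x y = (if sw then (y, x) else (x, y))"

lemma oriented_eq_iff [simp]: "oriented sw x y = oriented sw x' y' \<longleftrightarrow> x = x' \<and> y = y'"
  unfolding oriented_def by auto

lemma closed_segment_oriented_fixed_y:
  assumes "a \<le> c"
  shows "closed_segment (oriented sw a y) (oriented sw c y) = (\<lambda>x. oriented sw x y) ` {a..c}"
  using assms
  by (cases sw) (auto simp: oriented_def closed_segment_same_fst closed_segment_same_snd
      closed_segment_eq_real_ivl)

lemma closed_segment_oriented_fixed_x:
  assumes "a \<le> c"
  shows "closed_segment (oriented sw x a) (oriented sw x c) = (\<lambda>y. oriented sw x y) ` {a..c}"
proof -
  have "oriented sw x y = oriented (\<not> sw) y x" for y unfolding oriented_def by simp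
  thus ?thesis using closed_segment_oriented_fixed_y[OF assms, of "\<not> sw" x] by simp
qed

definition spine_edge :: "bool \<Rightarrow> nat \<Rightarrow> point set" where
  "spine_edge sw i = {oriented sw (real i) 0, oriented sw (real (Suc i)) 0}"

definition tooth :: "bool \<Rightarrow> real \<Rightarrow> nat \<Rightarrow> point set" where
  "tooth sw L i = {oriented sw (real i) 0, oriented sw (real i) L}"

definition comb_vertices :: "bool \<Rightarrow> real \<Rightarrow> nat \<Rightarrow> point set" where
  "comb_vertices sw L t = (\<lambda>i. oriented sw (real i) 0) ` {1..t} \<union> (\<lambda>i. oriented sw (real i) L) ` {1..t}"

definition comb_edges :: "bool \<Rightarrow> real \<Rightarrow> nat \<Rightarrow> point set set" where
  "comb_edges sw L t = spine_edge sw ` {1..<t} \<union> tooth sw L ` {1..t}"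

lemma edge_seg_spine_edge:
  "edge_seg (spine_edge sw i) = (\<lambda>x. oriented sw x 0) ` {real i..real (Suc i)}"
  unfolding spine_edge_def by (simp add: closed_segment_oriented_fixed_y)

lemma edge_seg_tooth:
  "0 \<le> L \<Longrightarrow> edge_seg (tooth sw L i) = (\<lambda>y. oriented sw (real i) y) ` {0..L}"
  unfolding tooth_def by (simp add: closed_segment_oriented_fixed_x)

lemma comb_Suc:
  assumes "1 \<le> t"
  shows "comb_vertices sw L (Suc t)
      = insert (oriented sw (real (Suc t)) L) (insert (oriented sw (real (Suc t)) 0) (comb_vertices sw L t))"
    and "comb_edges sw L (Suc t)
      = insert {oriented sw (real (Suc t)) L, oriented sw (real (Suc t)) 0}
          (insert {oriented sw (real (Suc t)) 0, oriented sw (real t) 0} (comb_edges sw L t))"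
  using assms unfolding comb_vertices_def comb_edges_def spine_edge_def tooth_def
  by (auto simp: atLeastAtMostSuc_conv atLeastLessThanSuc insert_commute simp del: of_nat_Suc)

lemma comb_tree:
  assumes "L \<noteq> 0" "1 \<le> t"
  shows "geom_tree (comb_vertices sw L t) (comb_edges sw L t)"
  using assms(2)
proof (induction t rule: nat_induct_at_least)
  case base
  have "comb_vertices sw L 1 = {oriented sw 1 0, oriented sw 1 L}" "comb_edges sw L 1 = {{oriented sw 1 0, oriented sw 1 L}}"
    unfolding comb_vertices_def comb_edges_def tooth_def by auto
  thus ?case using geom_tree_doubleton assms(1) by simp
next
  case (Suc t)
  have "oriented sw (real (Suc t)) 0 \<notin> comb_vertices sw L t" "oriented sw (real t) 0 \<in> comb_vertices sw L t"
    using assms(1) Suc(1) unfolding comb_vertices_def by auto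
  with Suc.IH have "geom_tree (insert (oriented sw (real (Suc t)) 0) (comb_vertices sw L t))
      (insert {oriented sw (real (Suc t)) 0, oriented sw (real t) 0} (comb_edges sw L t))"
    by (rule geom_tree_insert_leaf)
  moreover have "oriented sw (real (Suc t)) L \<notin> insert (oriented sw (real (Suc t)) 0) (comb_vertices sw L t)"
    using assms(1) unfolding comb_vertices_def by auto
  ultimately show ?case unfolding comb_Suc[OF Suc(1)] by (rule geom_tree_insert_leaf) simp
qed

lemma comb_edges_cases:
  "e \<in> comb_edges sw L t \<Longrightarrow> (\<exists>i. e = spine_edge sw i) \<or> (\<exists>i. e = tooth sw L i)"
  unfolding comb_edges_def by blast

lemma spine_edges_meet:
  assumes "i \<noteq> j" "p \<in> edge_seg (spine_edge sw i)" "p \<in> edge_seg (spine_edge sw j)"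
  shows "p \<in> spine_edge sw i \<inter> spine_edge sw j"
proof -
  obtain x where x: "p = oriented sw x 0" "real i \<le> x" "x \<le> real (Suc i)"
    using assms(2) by (auto simp: edge_seg_spine_edge)
  moreover have "real j \<le> x" "x \<le> real (Suc j)"
    using assms(3) x(1) by (auto simp: edge_seg_spine_edge)
  moreover have "Suc i \<le> j \<or> Suc j \<le> i" using assms(1) by arith
  hence "real (Suc i) \<le> real j \<or> real (Suc j) \<le> real i" by (simp only: of_nat_le_iff)
  ultimately have "x = real (Suc i) \<and> x = real j \<or> x = real (Suc j) \<and> x = real i" by linarith
  thus ?thesis using x(1) unfolding spine_edge_def by auto
qed

lemma spine_edge_tooth_meet:
  assumes "0 \<le> L" "p \<in> edge_seg (spine_edge sw i)" "p \<in> edge_seg (tooth sw L j)"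
  shows "p \<in> spine_edge sw i \<inter> tooth sw L j"
proof -
  obtain x where x: "p = oriented sw x 0" "real i \<le> x" "x \<le> real (Suc i)"
    using assms(2) by (auto simp: edge_seg_spine_edge)
  moreover obtain y where "p = oriented sw (real j) y" using assms(1,3) by (auto simp: edge_seg_tooth)
  ultimately have xy: "x = real j" "y = 0" "i \<le> j" "j \<le> Suc i" by auto
  hence "j = i \<or> j = Suc i" by linarith
  thus ?thesis using x(1) xy unfolding spine_edge_def tooth_def by auto
qed

lemma teeth_disjoint:
  "0 \<le> L \<Longrightarrow> i \<noteq> j \<Longrightarrow> edge_seg (tooth sw L i) \<inter> edge_seg (tooth sw L j) = {}"
  by (auto simp: edge_seg_tooth)

lemma comb_noncrossing:
  assumes "0 \<le> L"
  shows "noncrossing (comb_edges sw L t)"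
  unfolding noncrossing_def
proof (intro ballI impI subsetI)
  fix e f p
  assume e: "e \<in> comb_edges sw L t" and f: "f \<in> comb_edges sw L t" and "e \<noteq> f"
    and p: "p \<in> edge_seg e \<inter> edge_seg f"
  show "p \<in> e \<inter> f"
    using comb_edges_cases[OF e] comb_edges_cases[OF f] \<open>e \<noteq> f\<close> p
      spine_edges_meet spine_edge_tooth_meet[OF assms] teeth_disjoint[OF assms]
    by (metis IntD1 IntD2 IntI empty_iff)
qed

lemma tree_union_comb:
  "tree_union (comb_edges sw L t)
    = (\<Union>i\<in>{1..<t}. edge_seg (spine_edge sw i)) \<union> (\<Union>i\<in>{1..t}. edge_seg (tooth sw L i))"
  unfolding tree_union_def comb_edges_def by auto

lemma real_interval_unit_cover:
  assumes "1 \<le> x" "x < real t"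
  shows "\<exists>i\<in>{1..<t}. x \<in> {real i..real (Suc i)}"
proof -
  define i where "i = nat \<lfloor>x\<rfloor>"
  have "real i \<le> x" "x \<le> real (Suc i)" "1 \<le> i" "i < t"
    using assms unfolding i_def by (auto simp: le_nat_iff nat_less_iff floor_less_iff) linarith+
  thus ?thesis by auto
qed

lemma comb_num_segments:
  assumes "0 \<le> L" "1 \<le> t"
  shows "num_segments (comb_edges sw L t) \<le> Suc t"
proof -
  define s where "s i = (if i = 0 then (oriented sw 1 0, oriented sw (real t) 0)
    else (oriented sw (real i) 0, oriented sw (real i) L))" for i
  let ?spine = "(\<lambda>x. oriented sw x 0) ` {1..real t}"
  let ?spines = "\<Union>i\<in>{1..<t}. edge_seg (spine_edge sw i)"
  let ?teeth = "\<Union>i\<in>{1..t}. edge_seg (tooth sw L i)"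
  have "{..<Suc t} = insert 0 {1..t}" by auto
  hence "(\<Union>i<Suc t. seg s i) = seg s 0 \<union> (\<Union>i\<in>{1..t}. seg s i)" by simp
  also have "\<dots> = ?spine \<union> ?teeth"
    using assms(2) by (auto simp: seg_def s_def tooth_def closed_segment_oriented_fixed_y)
  also have "\<dots> = ?spines \<union> ?teeth"
  proof -
    have "?spines \<subseteq> ?spine" by (auto simp: edge_seg_spine_edge)
    moreover have "?spine \<subseteq> ?spines \<union> ?teeth"
    proof
      fix p assume "p \<in> ?spine"
      then obtain x where x: "p = oriented sw x 0" "1 \<le> x" "x \<le> real t" by auto
      show "p \<in> ?spines \<union> ?teeth"
      proof (cases "x = real t")
        case True
        have "p \<in> edge_seg (tooth sw L t)" using True x(1) assms(1) by (auto simp: edge_seg_tooth)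
        thus ?thesis using assms(2) by auto
      next
        case False
        thus ?thesis using real_interval_unit_cover[of x t] x by (fastforce simp: edge_seg_spine_edge)
      qed
    qed
    ultimately show ?thesis by blast
  qed
  finally show ?thesis by (intro num_segments_le) (simp add: tree_union_comb)
qed

lemma comb_one_num_segments: "num_segments (comb_edges sw L 1) \<le> 1"
proof -
  have "comb_edges sw L 1 = {tooth sw L 1}" unfolding comb_edges_def by auto
  hence "(\<Union>i<1. seg (\<lambda>_. (oriented sw 1 0, oriented sw 1 L)) i) = tree_union (comb_edges sw L 1)"
    by (simp add: seg_def tree_union_def tooth_def lessThan_Suc)
  thus ?thesis by (rule num_segments_le)
qed

lemma comb_covers_grid:
  "covers (comb_edges (m < n) (real (max n m)) (min n m)) (grid n m)"
  unfolding covers_def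
proof
  fix p assume "p \<in> grid n m"
  then obtain a b :: nat where ab: "p = (real a, real b)" "1 \<le> a" "a \<le> n" "1 \<le> b" "b \<le> m"
    unfolding grid_def by blast
  obtain i y :: nat where iy: "p = oriented (m < n) (real i) (real y)" "1 \<le> i" "i \<le> min n m" "y \<le> max n m"
  proof (cases "m < n")
    case True
    thus ?thesis using that[of b a] ab by (simp add: oriented_def)
  next
    case False
    thus ?thesis using that[of a b] ab by (simp add: oriented_def)
  qed
  hence "p \<in> edge_seg (tooth (m < n) (real (max n m)) i)" by (auto simp: edge_seg_tooth)
  thus "p \<in> tree_union (comb_edges (m < n) (real (max n m)) (min n m))"
    using iy(2,3) by (auto simp: tree_union_comb)
qed

definition star_centre :: point where
  "star_centre = (3/2, 3/2)"

definition star_edges :: "point set set" where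
  "star_edges = {{(2,1), star_centre}, {(1,2), star_centre}, {(2,2), star_centre}, {(1,1), star_centre}}"

lemma star_tree: "geom_tree {(2,1), (1,2), (2,2), (1,1), star_centre} star_edges"
  unfolding star_edges_def
  by (intro geom_tree_insert_leaf geom_tree_doubleton) (auto simp: star_centre_def)

lemma star_radii_meet:
  assumes "q \<in> {(1,1), (2,2), (1,2), (2,1)}" "q' \<in> {(1,1), (2,2), (1,2), (2,1)}" "q \<noteq> q'"
    and "p \<in> closed_segment q star_centre" "p \<in> closed_segment q' star_centre"
  shows "p = star_centre"
proof -
  obtain u where u: "0 \<le> u" "u \<le> 1"
    "fst p = (1 - u) * fst q + u * fst star_centre" "snd p = (1 - u) * snd q + u * snd star_centre"
    using closed_segment_coords[OF assms(4)] .
  obtain v where v: "0 \<le> v" "v \<le> 1"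
    "fst p = (1 - v) * fst q' + v * fst star_centre" "snd p = (1 - v) * snd q' + v * snd star_centre"
    using closed_segment_coords[OF assms(5)] .
  have "fst p = 3/2 \<and> snd p = 3/2" using assms(1-3) u v unfolding star_centre_def by auto
  thus ?thesis unfolding star_centre_def by (simp add: prod_eq_iff)
qed

lemma star_noncrossing: "noncrossing star_edges"
  unfolding noncrossing_def
proof (intro ballI impI subsetI)
  fix e f p
  assume e: "e \<in> star_edges" and f: "f \<in> star_edges" and "e \<noteq> f" and p: "p \<in> edge_seg e \<inter> edge_seg f"
  have radii: "star_edges = (\<lambda>q. {q, star_centre}) ` {(1,1), (2,2), (1,2), (2,1)}"
    unfolding star_edges_def by auto
  obtain q where q: "q \<in> {(1,1), (2,2), (1,2), (2,1)}" "e = {q, star_centre}" using e unfolding radii by blast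
  obtain q' where q': "q' \<in> {(1,1), (2,2), (1,2), (2,1)}" "f = {q', star_centre}" using f unfolding radii by blast
  have "q \<noteq> q'" using \<open>e \<noteq> f\<close> q q' by auto
  moreover have "p \<in> closed_segment q star_centre" "p \<in> closed_segment q' star_centre"
    using p q q' by auto
  ultimately have "p = star_centre" by (rule star_radii_meet[OF q(1) q'(1)])
  thus "p \<in> e \<inter> f" using q q' by simp
qed

lemma star_num_segments: "num_segments star_edges \<le> 2"
proof -
  have centre: "star_centre \<in> closed_segment (1,1) (2,2)" "star_centre \<in> closed_segment (1,2) (2,1)"
    unfolding closed_segment_def star_centre_def
    by (rule CollectI, rule exI[of _ "1/2"], simp add: scaleR_prod_def)+
  define s :: "nat \<Rightarrow> point \<times> point" where "s i = (if i = 0 then ((1,1), (2,2)) else ((1,2), (2,1)))" for i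
  have "(\<Union>i<2. seg s i) = closed_segment (1,1) (2,2) \<union> closed_segment (1,2) (2,1)"
    by (auto simp: seg_def s_def lessThan_def less_Suc_eq numeral_2_eq_2)
  also have "\<dots> = tree_union star_edges"
    using Un_closed_segment[OF centre(1)] Un_closed_segment[OF centre(2)]
    by (auto simp: tree_union_def star_edges_def closed_segment_commute)
  finally show ?thesis by (rule num_segments_le)
qed

lemma star_covers_grid: "covers star_edges (grid 2 2)"
  unfolding covers_def
proof
  fix p assume "p \<in> grid 2 2"
  then obtain i j :: nat where "p = (real i, real j)" "i \<in> {1, 2}" "j \<in> {1, 2}"
    unfolding grid_def by force
  hence "p \<in> {(1,1), (2,2), (1,2), (2,1)}" by auto
  thus "p \<in> tree_union star_edges" by (auto simp: tree_union_def star_edges_def)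
qed

lemma grid_cover_construction:
  assumes "1 \<le> n" "1 \<le> m"
  obtains V E where "geom_tree V E" "noncrossing E" "covers E (grid n m)" "num_segments E \<le> grid_value n m"
proof (cases "n = 2 \<and> m = 2")
  case True
  thus ?thesis
    using that star_tree star_noncrossing star_covers_grid star_num_segments
    by (auto simp: grid_value_def)
next
  case False
  let ?sw = "m < n" and ?L = "real (max n m)" and ?t = "min n m"
  have "1 \<le> ?t" "0 < ?L" using assms by auto
  moreover have "num_segments (comb_edges ?sw ?L ?t) \<le> grid_value n m"
  proof (cases "n = 1 \<or> m = 1")
    case True
    hence "?t = 1" using assms by auto
    thus ?thesis using comb_one_num_segments True by (auto simp: grid_value_def)
  next
    case False
    thus ?thesis using comb_num_segments[of ?L ?t] \<open>1 \<le> ?t\<close> \<open>\<not> (n = 2 \<and> m = 2)\<close>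
      by (auto simp: grid_value_def)
  qed
  ultimately show ?thesis
    using that comb_tree comb_noncrossing comb_covers_grid by (metis less_eq_real_def less_irrefl)
qed

theorem claim5:
  fixes n m :: nat
  assumes "n \<ge> 1" and "m \<ge> 1"
  shows "(\<exists>V E. geom_tree V E \<and> covers E (grid n m) \<and>
            num_segments E = grid_value n m)
       \<and> (\<exists>V E. geom_tree V E \<and> noncrossing E \<and> covers E (grid n m) \<and>
            num_segments E = grid_value n m)
       \<and> (\<forall>V E. geom_tree V E \<and> covers E (grid n m) \<longrightarrow>
            num_segments E \<ge> grid_value n m)"
proof -
  obtain V E where VE: "geom_tree V E" "noncrossing E" "covers E (grid n m)"
    and upper: "num_segments E \<le> grid_value n m"
    using grid_cover_construction[OF assms] .
  have lower: "\<forall>V E. geom_tree V E \<and> covers E (grid n m) \<longrightarrow> grid_value n m \<le> num_segments E"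
    using grid_value_le_num_segments assms by blast
  hence "num_segments E = grid_value n m" using upper VE by (simp add: le_antisym)
  thus ?thesis using VE lower by blast
qed

end
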